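(* For $n\ge3$, the set $\mathcal G$ is a proper subset of $\mathcal S_1$, the class of $n\times n$ stochastic Sarymsakov matrices.
   Context: Let $\mathcal N=\{1,\ldots,n\}$. A matrix is stochastic if it is entrywise nonnegative with row sums $1$; it is SIA if $\lim_{m\to\infty}P^m=\mathbf 1c^T$ for some nonnegative $c$ with entries summing to $1$. For stochastic $P$ and $\mathcal A\subseteq\mathcal N$, $F_P(\mathcal A)=\{j:\ p_{ij}>0\text{ for some } i\in\mathcal A\}$. $\mathcal S_1$ is the set of stochastic $n\times n$ matrices $P$ (Sarymsakov matrices) such that for any disjoint nonempty $\mathcal A,\tilde{\mathcal A}\subseteq\mathcal N$, either $F_P(\mathcal A)\cap F_P(\tilde{\mathcal A})\neq\emptyset$, or $F_P(\mathcal A)\cap F_P(\tilde{\mathcal A})=\emptyset$ and $|F_P(\mathcal A)\cup F_P(\tilde{\mathcal A})|>|\mathcal A\cup\tilde{\mathcal A}|$. $\mathcal G$ is the set of $n\times n$ SIA matrices $P$ such that $QP$ is SIA for every $n\times n$ SIA matrix $Q$. *)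

theory Defs
  imports "HOL-Analysis.Analysis"
begin

text \<open>Square matrices of size n are indexed by a finite type 'n with CARD('n) = n;
  the index set N = {1..n} is UNIV :: 'n set.\<close>

definition stochastic :: "real^'n^'n \<Rightarrow> bool" where
  "stochastic P \<longleftrightarrow> (\<forall>i j. P $ i $ j \<ge> 0) \<and> (\<forall>i. (\<Sum>j\<in>UNIV. P $ i $ j) = 1)"

fun mpow :: "real^'n^'n \<Rightarrow> nat \<Rightarrow> real^'n^'n" where
  "mpow P 0 = mat 1"
| "mpow P (Suc m) = mpow P m ** P"

definition SIA :: "real^'n^'n \<Rightarrow> bool" where
  "SIA P \<longleftrightarrow> stochastic P \<and>
     (\<exists>c :: real^'n. (\<forall>j. c $ j \<ge> 0) \<and> (\<Sum>j\<in>UNIV. c $ j) = 1 \<and>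
        (\<lambda>m. mpow P m) \<longlonglongrightarrow> (\<chi> i j. c $ j))"

definition F_P :: "real^'n^'n \<Rightarrow> 'n set \<Rightarrow> 'n set" where
  "F_P P A = {j. \<exists>i\<in>A. P $ i $ j > 0}"

definition S1 :: "(real^'n^'n) set" where
  "S1 = {P. stochastic P \<and>
     (\<forall>A B :: 'n set. A \<noteq> {} \<and> B \<noteq> {} \<and> A \<inter> B = {} \<longrightarrow>
        (F_P P A \<inter> F_P P B \<noteq> {} \<or>
         (F_P P A \<inter> F_P P B = {} \<and> card (F_P P A \<union> F_P P B) > card (A \<union> B))))}"

definition G_class :: "(real^'n^'n) set" where
  "G_class = {P. SIA P \<and> (\<forall>Q :: real^'n^'n. SIA Q \<longrightarrow> SIA (Q ** P))}"

end

theory Submission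
  imports Defs
begin

text \<open>An SIA matrix cannot have two disjoint closed sets of states, nor can it
  alternate between two disjoint sets. If \<open>P \<in> \<G>\<close> violated the Sarymsakov
  condition for \<open>A, B\<close>, then either a selector matrix \<open>Q\<close> (a 0/1 matrix whose rows
  are unit vectors) with \<open>Q\<^sup>2\<close> of rank one maps \<open>F(A)\<close> into \<open>A\<close> and \<open>F(B)\<close> into \<open>B\<close>,
  making \<open>F(A)\<close> and \<open>F(B)\<close> closed for the product \<open>Q P\<close>, or counting forces
  \<open>{F(A), F(B)} = {A, B}\<close>, so that \<open>P\<close> itself has two closed classes or is periodic.
  For properness, a \<open>3 \<times> 3\<close> pattern on three distinct states, filled up with
  positive rows, is Sarymsakov, yet a suitable selector \<open>Q\<close> splits \<open>Q P\<close> into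
  the closed classes \<open>{b}\<close> and \<open>{a, c}\<close>.\<close>

definition rows_supported_in :: "real^'n^'n \<Rightarrow> 'n set \<Rightarrow> 'n set \<Rightarrow> bool" where
  "rows_supported_in M X Y \<longleftrightarrow> (\<forall>i\<in>X. \<forall>j. M $ i $ j \<noteq> 0 \<longrightarrow> j \<in> Y)"

lemma rows_supported_in_mult:
  fixes M N :: "real^'n^'n"
  assumes "rows_supported_in M X Y" "rows_supported_in N Y Z"
  shows "rows_supported_in (M ** N) X Z"
  unfolding rows_supported_in_def
proof (intro ballI allI impI)
  fix i j assume "i \<in> X" "(M ** N) $ i $ j \<noteq> 0"
  then obtain k where "M $ i $ k * N $ k $ j \<noteq> 0"
    by (auto simp: matrix_matrix_mult_def intro: sum.not_neutral_contains_not_neutral)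
  with assms \<open>i \<in> X\<close> show "j \<in> Z" by (auto simp: rows_supported_in_def)
qed

lemma rows_supported_in_mpow:
  fixes M :: "real^'n^'n"
  assumes "rows_supported_in M X Y" "rows_supported_in M Y X"
  shows "rows_supported_in (mpow M m) X (if even m then X else Y)"
proof (induction m)
  case 0
  show ?case by (simp add: rows_supported_in_def mat_def)
next
  case (Suc m)
  have "rows_supported_in M (if even m then X else Y) (if even (Suc m) then X else Y)"
    using assms by simp
  with Suc.IH show ?case by (auto intro: rows_supported_in_mult)
qed

lemma SIA_limit_vanishes:
  fixes M :: "real^'n^'n"
  assumes "SIA M"
  obtains c :: "real^'n" where "(\<Sum>j\<in>UNIV. c $ j) = 1"
    "\<And>i j. frequently (\<lambda>m. mpow M m $ i $ j = 0) sequentially \<Longrightarrow> c $ j = 0"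
proof -
  obtain c :: "real^'n" where c: "(\<Sum>j\<in>UNIV. c $ j) = 1"
    and lim: "(\<lambda>m. mpow M m) \<longlonglongrightarrow> (\<chi> i j. c $ j)"
    using assms unfolding SIA_def by blast
  have "c $ j = 0" if "frequently (\<lambda>m. mpow M m $ i $ j = 0) sequentially" for i j
  proof (rule ccontr)
    assume "c $ j \<noteq> 0"
    have "(\<lambda>m. mpow M m $ i $ j) \<longlonglongrightarrow> c $ j"
      using tendsto_vec_nth[OF tendsto_vec_nth[OF lim, of i], of j] by simp
    then have "eventually (\<lambda>m. mpow M m $ i $ j \<noteq> 0) sequentially"
      using \<open>c $ j \<noteq> 0\<close> by (rule tendsto_imp_eventually_ne)
    with that show False by (simp add: frequently_def)
  qed
  with c that show ?thesis by blast
qed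

lemma SIA_no_two_closed_classes:
  fixes M :: "real^'n^'n"
  assumes "x \<in> X" "y \<in> Y" "X \<inter> Y = {}"
    and "rows_supported_in M X X" "rows_supported_in M Y Y"
  shows "\<not> SIA M"
proof
  assume "SIA M"
  then obtain c :: "real^'n" where c: "(\<Sum>j\<in>UNIV. c $ j) = 1"
    and vanish: "\<And>i j. frequently (\<lambda>m. mpow M m $ i $ j = 0) sequentially \<Longrightarrow> c $ j = 0"
    using SIA_limit_vanishes by blast
  have outside: "frequently (\<lambda>m. mpow M m $ i $ j = 0) sequentially"
    if "rows_supported_in M Z Z" "i \<in> Z" "j \<notin> Z" for i j Z
    using rows_supported_in_mpow[OF that(1) that(1)] that(2,3)
    by (auto simp: rows_supported_in_def frequently_sequentially)
  have "c $ j = 0" for j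
  proof (cases "j \<in> X")
    case True
    with assms show ?thesis by (blast intro: vanish outside)
  next
    case False
    with assms show ?thesis by (blast intro: vanish outside)
  qed
  with c show False by simp
qed

lemma SIA_not_periodic:
  fixes M :: "real^'n^'n"
  assumes "x \<in> X" "X \<inter> Y = {}"
    and "rows_supported_in M X Y" "rows_supported_in M Y X"
  shows "\<not> SIA M"
proof
  assume "SIA M"
  then obtain c :: "real^'n" where c: "(\<Sum>j\<in>UNIV. c $ j) = 1"
    and vanish: "\<And>i j. frequently (\<lambda>m. mpow M m $ i $ j = 0) sequentially \<Longrightarrow> c $ j = 0"
    using SIA_limit_vanishes by blast
  have zero: "mpow M m $ x $ j = 0" if "j \<notin> (if even m then X else Y)" for m j
    using rows_supported_in_mpow[OF assms(3,4), of m] assms(1) that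
    by (auto simp: rows_supported_in_def)
  have "c $ j = 0" for j
  proof (rule vanish[of x], unfold frequently_sequentially, intro allI)
    fix N :: nat
    define m where "m = 2 * N + (if j \<in> X then 1 else 0)"
    have "j \<notin> (if even m then X else Y)"
      using assms(2) by (auto simp: m_def)
    then have "mpow M m $ x $ j = 0" by (rule zero)
    moreover have "m \<ge> N" by (simp add: m_def)
    ultimately show "\<exists>m\<ge>N. mpow M m $ x $ j = 0" by blast
  qed
  with c show False by simp
qed

definition selector_matrix :: "('n \<Rightarrow> 'n) \<Rightarrow> real^'n^'n" where
  "selector_matrix f = (\<chi> i j. if j = f i then 1 else 0)"

lemma selector_matrix_mult: "(selector_matrix f ** M) $ i $ j = M $ f i $ j"
proof -
  have "(selector_matrix f ** M) $ i $ j = (\<Sum>k\<in>UNIV. (if k = f i then 1 else 0) * M $ k $ j)"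
    by (simp add: matrix_matrix_mult_def selector_matrix_def)
  also have "\<dots> = (\<Sum>k\<in>UNIV. if k = f i then M $ k $ j else 0)"
    by (rule sum.cong) auto
  finally show ?thesis by simp
qed

lemma selector_matrix_mult_selector_matrix:
  "selector_matrix f ** selector_matrix g = selector_matrix (g \<circ> f)"
  by (simp add: vec_eq_iff selector_matrix_mult) (simp add: selector_matrix_def)

lemma rows_supported_in_selector_matrix:
  "f ` X \<subseteq> Y \<Longrightarrow> rows_supported_in (selector_matrix f) X Y"
  by (auto simp: rows_supported_in_def selector_matrix_def split: if_splits)

lemma SIA_selector_matrix:
  fixes q :: "'n::finite \<Rightarrow> 'n"
  assumes q_twice: "\<And>x. q (q x) = k"
  shows "SIA (selector_matrix q)"
proof -
  have "q k = k" using q_twice by metis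
  have pow: "mpow (selector_matrix q) (m + 2) = selector_matrix (\<lambda>_. k)" for m
  proof (induction m)
    case 0
    show ?case
      by (simp add: numeral_2_eq_2 matrix_mul_lid selector_matrix_mult_selector_matrix comp_def q_twice)
  next
    case (Suc m)
    then show ?case
      by (simp add: selector_matrix_mult_selector_matrix comp_def \<open>q k = k\<close>)
  qed
  define c :: "real^'n" where "c = (\<chi> j. if j = k then 1 else 0)"
  have "selector_matrix (\<lambda>_. k) = (\<chi> i j. c $ j)"
    by (simp add: c_def selector_matrix_def)
  with pow have "(\<lambda>m. mpow (selector_matrix q) (m + 2)) \<longlonglongrightarrow> (\<chi> i j. c $ j)"
    by simp
  then have "(\<lambda>m. mpow (selector_matrix q) m) \<longlonglongrightarrow> (\<chi> i j. c $ j)"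
    by (rule LIMSEQ_offset)
  moreover have "stochastic (selector_matrix q)"
    by (simp add: stochastic_def selector_matrix_def)
  moreover have "\<forall>j. c $ j \<ge> 0" "(\<Sum>j\<in>UNIV. c $ j) = 1" by (auto simp: c_def)
  ultimately show ?thesis unfolding SIA_def by blast
qed

lemma stochastic_row_has_positive_entry:
  assumes "stochastic P"
  shows "\<exists>j. P $ i $ j > 0"
proof (rule ccontr)
  assume "\<nexists>j. P $ i $ j > 0"
  with assms have "\<forall>j. P $ i $ j = 0"
    unfolding stochastic_def by (meson order.antisym not_less)
  then have "(\<Sum>j\<in>UNIV. P $ i $ j) = 0" by simp
  with assms show False by (simp add: stochastic_def)
qed

lemma F_P_nonempty: "stochastic P \<Longrightarrow> A \<noteq> {} \<Longrightarrow> F_P P A \<noteq> {}"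
  using stochastic_row_has_positive_entry by (fastforce simp: F_P_def)

lemma rows_supported_in_F_P: "stochastic P \<Longrightarrow> rows_supported_in P A (F_P P A)"
  by (force simp: rows_supported_in_def F_P_def stochastic_def less_le)

lemma disjoint_supersets_eq_if_card_le:
  fixes A B C D :: "'a::finite set"
  assumes "A \<subseteq> C" "B \<subseteq> D" "C \<inter> D = {}" "card (C \<union> D) \<le> card (A \<union> B)"
  shows "A = C \<and> B = D"
proof -
  have "A \<union> B = C \<union> D"
  proof (rule card_subset_eq)
    show "A \<union> B \<subseteq> C \<union> D" using assms(1,2) by blast
    then show "card (A \<union> B) = card (C \<union> D)"
      using assms(4) by (simp add: card_mono order.antisym)
  qed simp
  with assms(1-3) show ?thesis by blast
qed

lemma G_class_subset_F_P_if_disjoint: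
  fixes P :: "real^'n^'n"
  assumes "P \<in> G_class" "A \<noteq> {}" "B \<noteq> {}" and disjoint: "F_P P A \<inter> F_P P B = {}"
  shows "A \<subseteq> F_P P A \<or> B \<subseteq> F_P P A"
proof (rule ccontr)
  assume "\<not> ?thesis"
  then obtain u v where u: "u \<in> A" "u \<notin> F_P P A" and v: "v \<in> B" "v \<notin> F_P P A"
    by blast
  define q where "q x = (if x \<in> F_P P A then u else v)" for x
  have stoch: "stochastic P" and G: "\<And>Q. SIA Q \<Longrightarrow> SIA (Q ** P)"
    using assms(1) by (auto simp: G_class_def SIA_def)
  have "\<And>x. q (q x) = v" using u v by (simp add: q_def)
  then have "SIA (selector_matrix q ** P)" by (intro G SIA_selector_matrix)
  moreover have "\<not> SIA (selector_matrix q ** P)"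
  proof -
    have closed: "rows_supported_in (selector_matrix q ** P) (F_P P X) (F_P P X)"
      if "q ` F_P P X \<subseteq> X" for X
      using rows_supported_in_selector_matrix[OF that] rows_supported_in_F_P[OF stoch]
      by (rule rows_supported_in_mult)
    have "q ` F_P P A \<subseteq> A" "q ` F_P P B \<subseteq> B"
      using u v disjoint by (auto simp: q_def)
    moreover obtain x where "x \<in> F_P P A"
      using F_P_nonempty[OF stoch assms(2)] by blast
    moreover obtain y where "y \<in> F_P P B"
      using F_P_nonempty[OF stoch assms(3)] by blast
    ultimately show ?thesis
      using SIA_no_two_closed_classes[OF _ _ disjoint] closed by blast
  qed
  ultimately show False by contradiction
qed

lemma G_class_subset_S1: "G_class \<subseteq> S1"
proof
  fix P :: "real^'n^'n" assume G: "P \<in> G_class"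
  then have SIA: "SIA P" and stoch: "stochastic P" by (auto simp: G_class_def SIA_def)
  have "card (F_P P A \<union> F_P P B) > card (A \<union> B)"
    if ne: "A \<noteq> {}" "B \<noteq> {}" and "A \<inter> B = {}" and disjoint: "F_P P A \<inter> F_P P B = {}"
    for A B
  proof (rule ccontr)
    assume "\<not> ?thesis"
    then have card_le: "card (F_P P A \<union> F_P P B) \<le> card (A \<union> B)" by simp
    have disjoint': "F_P P B \<inter> F_P P A = {}" using disjoint by blast
    have cover: "A \<subseteq> F_P P A \<or> B \<subseteq> F_P P A" "B \<subseteq> F_P P B \<or> A \<subseteq> F_P P B"
      using G_class_subset_F_P_if_disjoint[OF G ne disjoint]
        G_class_subset_F_P_if_disjoint[OF G ne(2,1) disjoint'] by blast+
    have supp: "rows_supported_in P A (F_P P A)" "rows_supported_in P B (F_P P B)"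
      using stoch by (simp_all add: rows_supported_in_F_P)
    obtain a b where "a \<in> A" "b \<in> B" using ne by blast
    consider "A \<subseteq> F_P P A" "B \<subseteq> F_P P B" | "B \<subseteq> F_P P A" "A \<subseteq> F_P P B"
    proof (cases "A \<subseteq> F_P P A")
      case True
      have "\<not> A \<subseteq> F_P P B" using True ne(1) disjoint by blast
      then show ?thesis using True cover(2) by (intro that(1)) simp_all
    next
      case False
      then have "B \<subseteq> F_P P A" using cover(1) by simp
      moreover have "\<not> B \<subseteq> F_P P B" using calculation ne(2) disjoint by blast
      ultimately show ?thesis using cover(2) by (intro that(2)) simp_all
    qed
    then show False
    proof cases
      case 1
      then have "F_P P A = A" "F_P P B = B"
        using disjoint_supersets_eq_if_card_le[OF _ _ disjoint card_le] by simp_all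
      with supp have "rows_supported_in P A A" "rows_supported_in P B B" by simp_all
      with \<open>a \<in> A\<close> \<open>b \<in> B\<close> \<open>A \<inter> B = {}\<close> have "\<not> SIA P"
        by (rule SIA_no_two_closed_classes)
      with SIA show False by contradiction
    next
      case 2
      moreover have "card (F_P P A \<union> F_P P B) \<le> card (B \<union> A)"
        using card_le by (simp add: Un_commute)
      ultimately have "F_P P A = B" "F_P P B = A"
        using disjoint_supersets_eq_if_card_le[OF _ _ disjoint] by metis+
      with supp have "rows_supported_in P A B" "rows_supported_in P B A" by simp_all
      with \<open>a \<in> A\<close> \<open>A \<inter> B = {}\<close> have "\<not> SIA P"
        by (rule SIA_not_periodic)
      with SIA show False by contradiction
    qed
  qed
  with stoch show "P \<in> S1" unfolding S1_def by blast
qed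

definition S1_example :: "'n \<Rightarrow> 'n \<Rightarrow> 'n \<Rightarrow> real^'n^'n" where
  "S1_example a b c = (\<chi> i j.
     if i = a then (if j = b then 1 else 0)
     else if i = c then (if j = a \<or> j = c then 1/2 else 0)
     else 1 / real CARD('n))"

context
  fixes a b c :: "'n::finite"
  assumes distinct: "a \<noteq> b" "b \<noteq> c" "a \<noteq> c"
begin

lemma stochastic_S1_example: "stochastic (S1_example a b c)"
proof -
  have "(\<Sum>j\<in>UNIV. S1_example a b c $ i $ j) = 1" for i
  proof -
    consider "i = a" | "i = c" | "i \<noteq> a" "i \<noteq> c" by blast
    then show ?thesis
    proof cases
      case 2
      have "(\<Sum>j\<in>UNIV. if j = a \<or> j = c then 1/2 else 0 :: real) = (\<Sum>j\<in>{a, c}. 1/2)"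
        by (rule sum.mono_neutral_cong_right) auto
      with 2 distinct show ?thesis by (simp add: S1_example_def)
    qed (simp_all add: S1_example_def)
  qed
  then show ?thesis by (simp add: stochastic_def S1_example_def)
qed

lemma S1_example_in_S1: "S1_example a b c \<in> S1"
proof -
  let ?P = "S1_example a b c"
  have F_a: "F_P ?P {a} = {b}" and F_c: "F_P ?P {c} = {a, c}"
    using distinct by (auto simp: F_P_def S1_example_def)
  have F_full: "F_P ?P A = UNIV" if "i \<in> A" "i \<noteq> a" "i \<noteq> c" for i A
    using that by (auto simp: F_P_def S1_example_def)
  have "F_P ?P A \<inter> F_P ?P B \<noteq> {} \<or> card (F_P ?P A \<union> F_P ?P B) > card (A \<union> B)"
    if "A \<noteq> {}" "B \<noteq> {}" "A \<inter> B = {}" for A B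
  proof (cases "A \<union> B \<subseteq> {a, c}")
    case True
    with that have "A = {a} \<and> B = {c} \<or> A = {c} \<and> B = {a}" by blast
    with distinct F_a F_c show ?thesis by (auto simp: insert_commute)
  next
    case False
    then obtain i where "i \<in> A \<or> i \<in> B" "i \<noteq> a" "i \<noteq> c" by blast
    then have "F_P ?P A = UNIV \<or> F_P ?P B = UNIV" using F_full by blast
    with F_P_nonempty[OF stochastic_S1_example] that(1,2) show ?thesis by auto
  qed
  with stochastic_S1_example show ?thesis by (auto simp: S1_def)
qed

lemma S1_example_not_in_G_class: "S1_example a b c \<notin> G_class"
proof
  let ?P = "S1_example a b c"
  define q where "q x = (if x = b then a else c)" for x
  assume "?P \<in> G_class"
  moreover have "SIA (selector_matrix q)"
    using distinct by (intro SIA_selector_matrix[of _ c]) (simp add: q_def)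
  ultimately have "SIA (selector_matrix q ** ?P)" by (simp add: G_class_def)
  moreover have "\<not> SIA (selector_matrix q ** ?P)"
  proof (rule SIA_no_two_closed_classes)
    show "rows_supported_in (selector_matrix q ** ?P) {b} {b}"
      "rows_supported_in (selector_matrix q ** ?P) {a, c} {a, c}"
      using distinct by (auto simp: rows_supported_in_def selector_matrix_mult q_def S1_example_def)
  qed (use distinct in auto)
  ultimately show False by contradiction
qed

end

theorem proposition1:
  assumes "CARD('n::finite) \<ge> 3"
  shows "(G_class :: (real^'n^'n) set) \<subset> S1"
proof -
  obtain S :: "'n set" where "card S = 3"
    using ex_card[OF assms] by blast
  then obtain a b c :: 'n where "a \<noteq> b" "b \<noteq> c" "a \<noteq> c"
    by (auto simp: card_3_iff)
  then have "S1_example a b c \<in> S1 - G_class"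
    using S1_example_in_S1[of a b c] S1_example_not_in_G_class[of a b c] by blast
  with G_class_subset_S1 show ?thesis by blast
qed

end
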